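(* Let $h>0$ and let $\Sigma=X(\mathbb R^2)$ be a helicoidal surface of pitch $h$ in $\mathbb H^2\times\mathbb R$, oriented by the unit normal $\eta$. Then $\Sigma$ is a rotator to MCF if and only if $\Sigma$ is a translator to MCF with respect to the Killing field $-h\partial_t$, i.e. if and only if $H=\langle -h\partial_t,\eta\rangle$ on $\Sigma$, where $\partial_t$ is the gradient of the height function $(p,t)\mapsto t$ of $\mathbb H^2\times\mathbb R$.
   Context: Let $\mathbb L^3=(\mathbb R^3,\langle\cdot,\cdot\rangle)$ with $\langle\cdot,\cdot\rangle=dx_1^2+dx_2^2-dx_3^2$, and let $\mathbb H^2=\{p\in\mathbb L^3:\langle p,p\rangle=-1,\ x_3(p)>0\}$ (hyperboloid model) with the induced metric. The space $\mathbb H^2\times\mathbb R\subset\mathbb L^3\times\mathbb R$ carries the product metric $\langle\cdot,\cdot\rangle_{\mathbb H^2}+dt^2$. Identify $\mathbb R^2$ with $\{x_3=0\}\subset\mathbb L^3$ and let $J(x_1,x_2)=(-x_2,x_1)$; $e^{vJ}$ is the Euclidean rotation of $\mathbb R^2$ by angle $v$. For a regular curve $\alpha:\mathbb R\to\mathbb R^2$ parametrized by Euclidean arc length, set $T=\alpha'$, $N=JT$, $\tau=\langle\alpha,T\rangle$, $\mu=\langle\alpha,N\rangle$ (Euclidean inner products), and $\phi=\sqrt{1+|\alpha|^2}$, so that $\sigma=(\alpha,\phi)$ is a curve in $\mathbb H^2$. For $h>0$, the helicoidal surface of pitch $h$ generated by $\sigma$ is $\Sigma=X(\mathbb R^2)$,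 $X(u,v)=(e^{vJ}\alpha(u),\phi(u),hv)$. It is oriented by the unit normal $\eta=\rho\,(e^{vJ}(aT+bN),\ \mu,\ c)$ (components: the $\mathbb R^2$-part, the $x_3$-part, and the $\mathbb R$-factor part in $\mathbb L^3\times\mathbb R$), where, evaluated at $u$, $a=\mu\phi'$, $b=(1+\mu^2)/\phi$, $c=-\phi'/h$ and $\rho=(a^2+b^2-\mu^2+c^2)^{-1/2}$. The mean curvature $H$ is taken with respect to $\eta$ (half the trace of the second fundamental form $\langle\bar\nabla_{\cdot}\cdot,\eta\rangle$). Let $\xi(x_1,x_2,x_3,t)=(-x_2,x_1,0,0)$ be the Killing field generated by the rotations $\mathrm{diag}(e^{tJ},1,1)$ about the axis $\{(0,0,1)\}\times\mathbb R$. The surface is a rotator to MCF if $H=\langle\xi,\eta\rangle$ everywhere on it. *)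

theory Defs
  imports "HOL-Analysis.Analysis"
begin

text \<open>Points of L^3 x R are 4-tuples (x1, x2, x3, t); the first three coordinates
  live in Minkowski space L^3, the last one in the R factor.\<close>

type_synonym pt = "real \<times> real \<times> real \<times> real"

definition lprod :: "pt \<Rightarrow> pt \<Rightarrow> real" where
  "lprod p q = (case p of (x1, x2, x3, t) \<Rightarrow> case q of (y1, y2, y3, s) \<Rightarrow>
      x1 * y1 + x2 * y2 - x3 * y3 + t * s)"

definition Jrot :: "real \<times> real \<Rightarrow> real \<times> real" where
  "Jrot x = (- snd x, fst x)"

definition erot :: "real \<Rightarrow> real \<times> real \<Rightarrow> real \<times> real" where
  "erot v x = (cos v * fst x - sin v * snd x, sin v * fst x + cos v * snd x)"

definition Tc :: "(real \<Rightarrow> real \<times> real) \<Rightarrow> real \<Rightarrow> real \<times> real" where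
  "Tc \<alpha> u = vector_derivative \<alpha> (at u)"

definition Nc :: "(real \<Rightarrow> real \<times> real) \<Rightarrow> real \<Rightarrow> real \<times> real" where
  "Nc \<alpha> u = Jrot (Tc \<alpha> u)"

definition tauc :: "(real \<Rightarrow> real \<times> real) \<Rightarrow> real \<Rightarrow> real" where
  "tauc \<alpha> u = \<alpha> u \<bullet> Tc \<alpha> u"

definition muc :: "(real \<Rightarrow> real \<times> real) \<Rightarrow> real \<Rightarrow> real" where
  "muc \<alpha> u = \<alpha> u \<bullet> Nc \<alpha> u"

definition phic :: "(real \<Rightarrow> real \<times> real) \<Rightarrow> real \<Rightarrow> real" where
  "phic \<alpha> u = sqrt (1 + (norm (\<alpha> u))\<^sup>2)"

definition Xhel :: "(real \<Rightarrow> real \<times> real) \<Rightarrow> real \<Rightarrow> real \<Rightarrow> real \<Rightarrow> pt" where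
  "Xhel \<alpha> h u v = (let p = erot v (\<alpha> u) in (fst p, snd p, phic \<alpha> u, h * v))"

definition ac :: "(real \<Rightarrow> real \<times> real) \<Rightarrow> real \<Rightarrow> real" where
  "ac \<alpha> u = muc \<alpha> u * deriv (phic \<alpha>) u"

definition bc :: "(real \<Rightarrow> real \<times> real) \<Rightarrow> real \<Rightarrow> real" where
  "bc \<alpha> u = (1 + (muc \<alpha> u)\<^sup>2) / phic \<alpha> u"

definition cc :: "(real \<Rightarrow> real \<times> real) \<Rightarrow> real \<Rightarrow> real \<Rightarrow> real" where
  "cc \<alpha> h u = - deriv (phic \<alpha>) u / h"

definition rhoc :: "(real \<Rightarrow> real \<times> real) \<Rightarrow> real \<Rightarrow> real \<Rightarrow> real" where
  "rhoc \<alpha> h u = 1 / sqrt ((ac \<alpha> u)\<^sup>2 + (bc \<alpha> u)\<^sup>2 - (muc \<alpha> u)\<^sup>2 + (cc \<alpha> h u)\<^sup>2)"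

definition etahel :: "(real \<Rightarrow> real \<times> real) \<Rightarrow> real \<Rightarrow> real \<Rightarrow> real \<Rightarrow> pt" where
  "etahel \<alpha> h u v =
     (let w = erot v (ac \<alpha> u *\<^sub>R Tc \<alpha> u + bc \<alpha> u *\<^sub>R Nc \<alpha> u); r = rhoc \<alpha> h u
      in (r * fst w, r * snd w, r * muc \<alpha> u, r * cc \<alpha> h u))"

definition Xu :: "(real \<Rightarrow> real \<times> real) \<Rightarrow> real \<Rightarrow> real \<Rightarrow> real \<Rightarrow> pt" where
  "Xu \<alpha> h u v = vector_derivative (\<lambda>s. Xhel \<alpha> h s v) (at u)"

definition Xv :: "(real \<Rightarrow> real \<times> real) \<Rightarrow> real \<Rightarrow> real \<Rightarrow> real \<Rightarrow> pt" where
  "Xv \<alpha> h u v = vector_derivative (\<lambda>s. Xhel \<alpha> h u s) (at v)"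

definition Xuu :: "(real \<Rightarrow> real \<times> real) \<Rightarrow> real \<Rightarrow> real \<Rightarrow> real \<Rightarrow> pt" where
  "Xuu \<alpha> h u v = vector_derivative (\<lambda>s. Xu \<alpha> h s v) (at u)"

definition Xuv :: "(real \<Rightarrow> real \<times> real) \<Rightarrow> real \<Rightarrow> real \<Rightarrow> real \<Rightarrow> pt" where
  "Xuv \<alpha> h u v = vector_derivative (\<lambda>s. Xv \<alpha> h s v) (at u)"

definition Xvv :: "(real \<Rightarrow> real \<times> real) \<Rightarrow> real \<Rightarrow> real \<Rightarrow> real \<Rightarrow> pt" where
  "Xvv \<alpha> h u v = vector_derivative (\<lambda>s. Xv \<alpha> h u s) (at v)"

text \<open>Levi-Civita connection of H^2 x R (Gauss formula): the ambient flat derivative in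
  L^3 x R projected tangentially to H^2 x R at the point p = (p1,p2,p3,t), i.e.
  w + <w_L, p_L> (p_L, 0), using <p_L,p_L> = -1.\<close>
definition tproj :: "pt \<Rightarrow> pt \<Rightarrow> pt" where
  "tproj p w = (case p of (p1, p2, p3, t) \<Rightarrow> case w of (w1, w2, w3, w4) \<Rightarrow>
      (let k = w1 * p1 + w2 * p2 - w3 * p3 in (w1 + k * p1, w2 + k * p2, w3 + k * p3, w4)))"

definition mean_curv :: "(real \<Rightarrow> real \<times> real) \<Rightarrow> real \<Rightarrow> real \<Rightarrow> real \<Rightarrow> real" where
  "mean_curv \<alpha> h u v =
    (let p = Xhel \<alpha> h u v; \<eta> = etahel \<alpha> h u v;
         E = lprod (Xu \<alpha> h u v) (Xu \<alpha> h u v);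
         F = lprod (Xu \<alpha> h u v) (Xv \<alpha> h u v);
         G = lprod (Xv \<alpha> h u v) (Xv \<alpha> h u v);
         l = lprod (tproj p (Xuu \<alpha> h u v)) \<eta>;
         m = lprod (tproj p (Xuv \<alpha> h u v)) \<eta>;
         n = lprod (tproj p (Xvv \<alpha> h u v)) \<eta>
     in (G * l - 2 * F * m + E * n) / (2 * (E * G - F\<^sup>2)))"

definition xi_rot :: "pt \<Rightarrow> pt" where
  "xi_rot p = (case p of (x1, x2, x3, t) \<Rightarrow> (- x2, x1, 0, 0))"

definition dt_field :: pt where
  "dt_field = (0, 0, 0, 1)"

definition is_rotator :: "(real \<Rightarrow> real \<times> real) \<Rightarrow> real \<Rightarrow> bool" where
  "is_rotator \<alpha> h \<longleftrightarrow>
     (\<forall>u v. mean_curv \<alpha> h u v = lprod (xi_rot (Xhel \<alpha> h u v)) (etahel \<alpha> h u v))"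

definition is_translator :: "(real \<Rightarrow> real \<times> real) \<Rightarrow> real \<Rightarrow> pt \<Rightarrow> bool" where
  "is_translator \<alpha> h Y \<longleftrightarrow> (\<forall>u v. mean_curv \<alpha> h u v = lprod Y (etahel \<alpha> h u v))"

definition smooth_curve :: "(real \<Rightarrow> real \<times> real) \<Rightarrow> bool" where
  "smooth_curve \<alpha> \<longleftrightarrow> (\<exists>D :: nat \<Rightarrow> real \<Rightarrow> real \<times> real. D 0 = \<alpha> \<and>
      (\<forall>n u. (D n has_vector_derivative D (Suc n) u) (at u)))"

definition arclength_param :: "(real \<Rightarrow> real \<times> real) \<Rightarrow> bool" where
  "arclength_param \<alpha> \<longleftrightarrow> (\<forall>u. norm (vector_derivative \<alpha> (at u)) = 1)"

end

theory Submission
  imports Defs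
begin

text \<open>The two sides of the equivalence agree pointwise, so the mean curvature never has to be
  computed. Since rotations about the axis commute with J and preserve the inner product,
  \<open>\<langle>\<xi>, \<eta>\<rangle> = \<rho> \<langle>J\<alpha>, aT + bN\<rangle> = \<rho> (b\<tau> - a\<mu>)\<close>, while \<open>\<langle>-h\<partial>\<^sub>t, \<eta>\<rangle> = -h\<rho>c = \<rho>\<phi>'\<close>. Finally
  \<open>\<phi>' = \<tau>/\<phi>\<close>, and \<open>b\<tau> - a\<mu> = ((1 + \<mu>\<^sup>2)\<tau> - \<mu>\<^sup>2\<tau>)/\<phi> = \<tau>/\<phi>\<close>.\<close>

lemma inner_erot_erot [simp]: "erot v x \<bullet> erot v y = x \<bullet> y"
proof -
  have "erot v x \<bullet> erot v y = ((cos v)\<^sup>2 + (sin v)\<^sup>2) * (x \<bullet> y)"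
    unfolding erot_def inner_prod_def by (simp only: fst_conv snd_conv inner_real_def) algebra
  then show ?thesis by simp
qed

lemma Jrot_erot: "Jrot (erot v x) = erot v (Jrot x)"
  by (simp add: Jrot_def erot_def algebra_simps)

lemma Jrot_Jrot [simp]: "Jrot (Jrot x) = - x"
  by (simp add: Jrot_def prod_eq_iff)

lemma inner_Jrot_left: "Jrot x \<bullet> y = - (x \<bullet> Jrot y)"
  by (simp add: Jrot_def inner_prod_def)

lemma lprod_xi_rot:
  "lprod (xi_rot (x1, x2, x3, t)) (y1, y2, y3, s) = Jrot (x1, x2) \<bullet> (y1, y2)"
  by (simp add: lprod_def xi_rot_def Jrot_def inner_prod_def)

lemma lprod_xi_rot_etahel:
  "lprod (xi_rot (Xhel \<alpha> h u v)) (etahel \<alpha> h u v)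
     = rhoc \<alpha> h u * (bc \<alpha> u * tauc \<alpha> u - ac \<alpha> u * muc \<alpha> u)"
proof -
  define w where "w = ac \<alpha> u *\<^sub>R Tc \<alpha> u + bc \<alpha> u *\<^sub>R Nc \<alpha> u"
  obtain x1 x2 where x: "erot v (\<alpha> u) = (x1, x2)" by fastforce
  obtain w1 w2 where w: "erot v w = (w1, w2)" by fastforce
  have "lprod (xi_rot (Xhel \<alpha> h u v)) (etahel \<alpha> h u v)
      = rhoc \<alpha> h u * (Jrot (erot v (\<alpha> u)) \<bullet> erot v w)"
    unfolding Xhel_def etahel_def Let_def x w [unfolded w_def]
    by (simp add: lprod_xi_rot x w Jrot_def algebra_simps)
  also have "Jrot (erot v (\<alpha> u)) \<bullet> erot v w = Jrot (\<alpha> u) \<bullet> w"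
    by (simp add: Jrot_erot)
  also have "\<dots> = bc \<alpha> u * tauc \<alpha> u - ac \<alpha> u * muc \<alpha> u"
    by (simp add: w_def Nc_def tauc_def muc_def inner_add_right inner_Jrot_left)
  finally show ?thesis .
qed

lemma lprod_dt_field_etahel:
  "lprod (k *\<^sub>R dt_field) (etahel \<alpha> h u v) = k * rhoc \<alpha> h u * cc \<alpha> h u"
  by (simp add: lprod_def dt_field_def etahel_def Let_def)

lemma deriv_phic:
  assumes "(\<alpha> has_vector_derivative T) (at u)"
  shows "deriv (phic \<alpha>) u = (\<alpha> u \<bullet> T) / phic \<alpha> u"
proof -
  have phic_eq: "phic \<alpha> = (\<lambda>s. sqrt (1 + \<alpha> s \<bullet> \<alpha> s))"
    by (simp add: fun_eq_iff phic_def power2_norm_eq_inner)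
  have pos: "0 < 1 + \<alpha> u \<bullet> \<alpha> u"
    by (simp add: add_pos_nonneg)
  have "((\<lambda>s. \<alpha> s \<bullet> \<alpha> s) has_derivative (\<lambda>x. \<alpha> u \<bullet> (x *\<^sub>R T) + (x *\<^sub>R T) \<bullet> \<alpha> u)) (at u)"
    using has_derivative_inner assms assms unfolding has_vector_derivative_def by blast
  then have "((\<lambda>s. 1 + \<alpha> s \<bullet> \<alpha> s) has_real_derivative 2 * (\<alpha> u \<bullet> T)) (at u)"
    unfolding has_field_derivative_def
    by (rule has_derivative_add[OF has_derivative_const, THEN has_derivative_eq_rhs])
       (auto simp: inner_commute)
  from DERIV_chain2[OF DERIV_real_sqrt[OF pos] this]
  have "deriv (phic \<alpha>) u = inverse (sqrt (1 + \<alpha> u \<bullet> \<alpha> u)) / 2 * (2 * (\<alpha> u \<bullet> T))"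
    unfolding phic_eq by (rule DERIV_imp_deriv)
  then show ?thesis
    by (simp add: phic_eq field_simps)
qed

lemma bc_tauc_minus_ac_muc:
  assumes "\<alpha> differentiable at u"
  shows "bc \<alpha> u * tauc \<alpha> u - ac \<alpha> u * muc \<alpha> u = deriv (phic \<alpha>) u"
proof -
  have "phic \<alpha> u > 0"
    by (simp add: phic_def add_pos_nonneg)
  moreover have "deriv (phic \<alpha>) u = tauc \<alpha> u / phic \<alpha> u"
    using deriv_phic assms by (simp add: tauc_def Tc_def vector_derivative_works)
  ultimately show ?thesis
    by (simp add: ac_def bc_def field_simps power2_eq_square)
qed

lemma smooth_curve_differentiable:
  assumes "smooth_curve \<alpha>"
  shows "\<alpha> differentiable at u"
  using assms unfolding smooth_curve_def vector_derivative_works[symmetric]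
  by (metis differentiableI_vector)

theorem theorem1p2:
  fixes \<alpha> :: "real \<Rightarrow> real \<times> real" and h :: real
  assumes "h > 0"
    and "smooth_curve \<alpha>"
    and "arclength_param \<alpha>"
  shows "is_rotator \<alpha> h \<longleftrightarrow> is_translator \<alpha> h ((- h) *\<^sub>R dt_field)"
proof -
  have "lprod (xi_rot (Xhel \<alpha> h u v)) (etahel \<alpha> h u v)
      = lprod ((- h) *\<^sub>R dt_field) (etahel \<alpha> h u v)" for u v
  proof -
    have "bc \<alpha> u * tauc \<alpha> u - ac \<alpha> u * muc \<alpha> u = - h * cc \<alpha> h u"
      using bc_tauc_minus_ac_muc[OF smooth_curve_differentiable[OF assms(2)]] assms(1)
      by (simp add: cc_def)
    then show ?thesis
      unfolding lprod_xi_rot_etahel lprod_dt_field_etahel by simp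
  qed
  then show ?thesis
    unfolding is_rotator_def is_translator_def by simp
qed

end
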